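(* Let $(A,\diamond,\circ,\lambda)$ be a left semi-truss such that $(A,\circ)$ is a group and $(A,\diamond)$ is a left cancellative semigroup with an idempotent $e$. Define $\sigma:A\to A$ by $\sigma(a)=a\circ e$. Then $\sigma$ is bijective, and with the binary operation $a\bullet b:=\sigma\big(\sigma^{-1}(a)\circ\sigma^{-1}(b)\big)$, the triple $(A,\diamond,\bullet)$ is a left semi-brace.
   Context: A left semi-truss $(A,\diamond,\circ,\lambda)$ is a set $A$ with two associative binary operations $\diamond,\circ$ and a function $\lambda:A\times A\to A$ such that $a\circ(b\diamond c)=(a\circ b)\diamond\lambda(a,c)$ for all $a,b,c\in A$. A semigroup $(A,\diamond)$ is left cancellative if $a\diamond b=a\diamond c$ implies $b=c$. A (left) semi-brace is a set $A$ with binary operations $\diamond,\bullet$ such that $(A,\diamond)$ is a left cancellative semigroup, $(A,\bullet)$ is a group, and $a\bullet(b\diamond c)=(a\bullet b)\diamond\big(a\bullet(a^\bullet\diamond c)\big)$ for all $a,b,c\in A$, where $a^\bullet$ is the inverse of $a$ in $(A,\bullet)$. *)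

theory Defs
  imports Main
begin

definition assoc_op :: "('a \<Rightarrow> 'a \<Rightarrow> 'a) \<Rightarrow> bool" where
  "assoc_op f \<longleftrightarrow> (\<forall>a b c. f (f a b) c = f a (f b c))"

definition left_semi_truss ::
  "('a \<Rightarrow> 'a \<Rightarrow> 'a) \<Rightarrow> ('a \<Rightarrow> 'a \<Rightarrow> 'a) \<Rightarrow> ('a \<Rightarrow> 'a \<Rightarrow> 'a) \<Rightarrow> bool" where
  "left_semi_truss dia circ lam \<longleftrightarrow> assoc_op dia \<and> assoc_op circ \<and>
     (\<forall>a b c. circ a (dia b c) = dia (circ a b) (lam a c))"

definition is_group :: "('a \<Rightarrow> 'a \<Rightarrow> 'a) \<Rightarrow> bool" where
  "is_group f \<longleftrightarrow> assoc_op f \<and>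
     (\<exists>u. (\<forall>a. f u a = a \<and> f a u = a) \<and> (\<forall>a. \<exists>b. f a b = u \<and> f b a = u))"

definition group_unit :: "('a \<Rightarrow> 'a \<Rightarrow> 'a) \<Rightarrow> 'a" where
  "group_unit f = (THE u. \<forall>a. f u a = a \<and> f a u = a)"

definition group_inv :: "('a \<Rightarrow> 'a \<Rightarrow> 'a) \<Rightarrow> 'a \<Rightarrow> 'a" where
  "group_inv f a = (THE b. f a b = group_unit f \<and> f b a = group_unit f)"

definition left_cancellative :: "('a \<Rightarrow> 'a \<Rightarrow> 'a) \<Rightarrow> bool" where
  "left_cancellative f \<longleftrightarrow> (\<forall>a b c. f a b = f a c \<longrightarrow> b = c)"

definition left_semi_brace :: "('a \<Rightarrow> 'a \<Rightarrow> 'a) \<Rightarrow> ('a \<Rightarrow> 'a \<Rightarrow> 'a) \<Rightarrow> bool" where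
  "left_semi_brace dia bul \<longleftrightarrow> assoc_op dia \<and> left_cancellative dia \<and> is_group bul \<and>
     (\<forall>a b c. bul a (dia b c) = dia (bul a b) (bul a (dia (group_inv bul a) c)))"

end

theory Submission
  imports Defs
begin

text \<open>Conjugating by \<open>\<sigma> a = a \<circ> e\<close> turns \<open>\<circ>\<close> into the isotope \<open>a \<bullet> b = (a \<circ> e\<^sup>-\<^sup>1) \<circ> b\<close>,
  a group with unit \<open>e\<close>. Since \<open>e\<close> is an idempotent of a left cancellative semigroup it is a
  left identity for \<open>\<diamond>\<close>, and \<open>a \<bullet> -\<close> is left multiplication by \<open>x = a \<circ> e\<^sup>-\<^sup>1\<close>. The semi-truss law
  then gives \<open>a \<bullet> (b \<diamond> c) = (a \<bullet> b) \<diamond> \<lambda>(x, c)\<close>, and the same law applied to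
  \<open>a\<^sup>\<bullet> \<diamond> c\<close> identifies \<open>\<lambda>(x, c)\<close> with \<open>a \<bullet> (a\<^sup>\<bullet> \<diamond> c)\<close>.\<close>

lemma is_group_assoc:
  assumes "is_group f"
  shows "f (f x y) z = f x (f y z)"
  using assms unfolding is_group_def assoc_op_def by blast

lemma group_unit_neutral:
  assumes "is_group f"
  shows "f (group_unit f) a = a" and "f a (group_unit f) = a"
proof -
  from assms obtain u where u: "\<forall>a. f u a = a \<and> f a u = a"
    unfolding is_group_def by blast
  have "group_unit f = u"
    unfolding group_unit_def by (rule the_equality) (use u in metis)+
  with u show "f (group_unit f) a = a" and "f a (group_unit f) = a" by simp_all
qed

lemma group_unit_unique:
  assumes "is_group f" and "\<forall>a. f u a = a"
  shows "group_unit f = u"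
  by (metis assms group_unit_neutral(2))

lemma group_inv_cancel:
  assumes "is_group f"
  shows "f a (group_inv f a) = group_unit f" and "f (group_inv f a) a = group_unit f"
proof -
  note assoc = is_group_assoc[OF assms(1)]
  from assms obtain u where u: "\<forall>a. f u a = a \<and> f a u = a"
    and inverses: "\<forall>a. \<exists>b. f a b = u \<and> f b a = u"
    unfolding is_group_def by blast
  have u_eq: "u = group_unit f"
    using group_unit_unique[OF assms] u by metis
  obtain b where b: "f a b = group_unit f" "f b a = group_unit f"
    using inverses u_eq by blast
  have "group_inv f a = b"
    unfolding group_inv_def
  proof (rule the_equality)
    fix c assume c: "f a c = group_unit f \<and> f c a = group_unit f"
    have "c = f c (f a b)" using b group_unit_neutral[OF assms] by simp
    also have "\<dots> = f (f c a) b" by (simp add: assoc)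
    finally show "c = b" using c group_unit_neutral[OF assms] by simp
  qed (use b in simp)
  with b show "f a (group_inv f a) = group_unit f" and "f (group_inv f a) a = group_unit f"
    by simp_all
qed

lemma bij_group_right_translation:
  assumes "is_group f"
  shows "bij (\<lambda>a. f a k)"
  by (rule o_bij[where g = "\<lambda>a. f a (group_inv f k)"])
    (simp_all add: comp_def id_def is_group_assoc[OF assms] group_inv_cancel[OF assms]
      group_unit_neutral[OF assms])

lemma inv_group_right_translation:
  assumes "is_group f"
  shows "inv (\<lambda>a. f a k) = (\<lambda>a. f a (group_inv f k))"
proof
  fix a
  have "(\<lambda>a. f a k) (f a (group_inv f k)) = a"
    by (simp add: is_group_assoc[OF assms] group_inv_cancel[OF assms] group_unit_neutral[OF assms])
  then show "inv (\<lambda>a. f a k) a = f a (group_inv f k)"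
    using inv_f_eq[OF bij_is_inj[OF bij_group_right_translation[OF assms]]] by metis
qed

lemma is_group_isotope:
  assumes "is_group f" and "f u k = group_unit f"
  shows "is_group (\<lambda>a b. f (f a k) b)" and "group_unit (\<lambda>a b. f (f a k) b) = u"
proof -
  note assoc = is_group_assoc[OF assms(1)]
  note neutral = group_unit_neutral[OF assms(1)] and inverse = group_inv_cancel[OF assms(1)]
  have inverse_left: "f a (f (group_inv f a) x) = x" "f (group_inv f a) (f a x) = x" for a x
    by (simp_all add: inverse neutral flip: assoc)
  have "k = f (f (group_inv f u) u) k" by (simp add: inverse neutral)
  also have "\<dots> = group_inv f u" by (simp add: assoc assms(2) neutral)
  finally have cancel: "f u (f k x) = x" "f k (f u x) = x" for x
    by (simp_all add: inverse_left)
  have k_u: "f k u = group_unit f"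
    using cancel(2)[of "group_unit f"] neutral by simp
  let ?i = "\<lambda>a. f u (f (group_inv f a) u)"
  have unit: "\<forall>a. f (f u k) a = a \<and> f (f a k) u = a"
    by (simp add: assoc cancel k_u neutral)
  have inverses: "\<forall>a. f (f a k) (?i a) = u \<and> f (f (?i a) k) a = u"
    by (simp add: assoc cancel inverse_left inverse neutral)
  have "assoc_op (\<lambda>a b. f (f a k) b)"
    unfolding assoc_op_def by (simp add: assoc)
  moreover have "\<forall>a. \<exists>b. f (f a k) b = u \<and> f (f b k) a = u"
    using inverses by blast
  ultimately show isotope: "is_group (\<lambda>a b. f (f a k) b)"
    unfolding is_group_def using unit by blast
  show "group_unit (\<lambda>a b. f (f a k) b) = u"
    using group_unit_unique[OF isotope] unit by blast
qed

lemma idempotent_left_neutral: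
  assumes "assoc_op f" and "left_cancellative f" and "f e e = e"
  shows "f e y = y"
proof -
  have "f e (f e y) = f e y"
    using assms(1,3) unfolding assoc_op_def by metis
  then show ?thesis using assms(2) unfolding left_cancellative_def by blast
qed

lemma left_semi_brace_from_truss:
  assumes truss: "left_semi_truss dia circ lam"
    and "left_cancellative dia" and "is_group bul"
    and bul: "\<And>a b. bul a b = circ (t a) b"
    and unit: "\<And>y. dia (group_unit bul) y = y"
  shows "left_semi_brace dia bul"
  unfolding left_semi_brace_def
proof (intro conjI allI)
  fix a b c
  have law: "circ x (dia y z) = dia (circ x y) (lam x z)" for x y z
    using truss unfolding left_semi_truss_def by blast
  have "bul a (dia (group_inv bul a) c) = dia (bul a (group_inv bul a)) (lam (t a) c)"
    by (simp only: bul law)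
  also have "\<dots> = lam (t a) c"
    by (simp add: group_inv_cancel[OF \<open>is_group bul\<close>] unit)
  finally show "bul a (dia b c) = dia (bul a b) (bul a (dia (group_inv bul a) c))"
    by (simp only: bul law)
qed (use assms(1-3) in \<open>simp_all add: left_semi_truss_def\<close>)

theorem proposition2p5:
  fixes dia circ :: "'a \<Rightarrow> 'a \<Rightarrow> 'a" and lam :: "'a \<Rightarrow> 'a \<Rightarrow> 'a" and e :: 'a
  assumes "left_semi_truss dia circ lam"
    and "is_group circ"
    and "assoc_op dia" and "left_cancellative dia"
    and "dia e e = e"
  defines "\<sigma> \<equiv> (\<lambda>a. circ a e)"
  shows "bij \<sigma> \<and>
    left_semi_brace dia (\<lambda>a b. \<sigma> (circ (inv \<sigma> a) (inv \<sigma> b)))"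
proof -
  let ?k = "group_inv circ e"
  have transport: "(\<lambda>a b. \<sigma> (circ (inv \<sigma> a) (inv \<sigma> b))) = (\<lambda>a b. circ (circ a ?k) b)"
    unfolding \<sigma>_def inv_group_right_translation[OF assms(2)]
    by (simp add: is_group_assoc[OF assms(2)] group_inv_cancel[OF assms(2)]
        group_unit_neutral[OF assms(2)])
  have group: "is_group (\<lambda>a b. circ (circ a ?k) b)"
    and unit: "group_unit (\<lambda>a b. circ (circ a ?k) b) = e"
    using is_group_isotope[OF assms(2) group_inv_cancel(1)[OF assms(2), of e]] by auto
  have "left_semi_brace dia (\<lambda>a b. circ (circ a ?k) b)"
    by (rule left_semi_brace_from_truss[OF assms(1,4) group, where t = "\<lambda>a. circ a ?k"])
      (simp_all add: unit idempotent_left_neutral[OF assms(3-5)])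
  then show ?thesis
    using bij_group_right_translation[OF assms(2)] transport unfolding \<sigma>_def by simp
qed

end
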